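(* Let $\lambda\in P_I^+$ and $\mu\in P$ with $\mu_+=\lambda_+$. If $\mu<_\emptyset\lambda$, then $\mu_{I,+}<_\emptyset\lambda$.
   Context: Let $\mathfrak a$ be a Euclidean space with inner product $(\cdot,\cdot)$, $R\subset\mathfrak a^*$ a root system with Weyl group $W$, positive roots $R^+$, simple roots $\Pi$, simple reflections $S$, Bruhat order $\le_W$. Let $P$ be the weight lattice and $P^+$ the dominant weights. For $\lambda\in P$ let $\lambda_+$ be the unique element of $W\lambda\cap P^+$ and $\overline v(\lambda)$ the minimal length element of $W$ with $\overline v(\lambda)\lambda_+=\lambda$. Write $\lambda\preceq\mu$ iff $\mu-\lambda\in\sum_{\alpha\in\Pi}\mathbb Z_{\ge0}\alpha$, and define $\lambda\le_\emptyset\mu$ iff $\lambda_+\preceq\mu_+$ and, in case $\lambda_+=\mu_+$, $\overline v(\lambda)\le_W\overline v(\mu)$; $<_\emptyset$ denotes the strict version. Let $I\subset S$, $W_I$ the parabolic subgroup generated by $I$, $R_I^+$ its positive roots, $P_I^+=\{\lambda\in P:(\lambda,\alpha)\ge0\ \forall\alpha\in R_I^+\}$, and for $\mu\in P$ let $\mu_{I,+}$ be the unique element of $W_I\mu\cap P_I^+$. *)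

theory Defs
  imports "HOL-Analysis.Analysis"
begin

text \<open>The Euclidean space a is a type of class euclidean_space; the dual a* is
identified with a via the inner product.\<close>

definition rfl :: "'a::euclidean_space \<Rightarrow> 'a \<Rightarrow> 'a" where
  "rfl \<alpha> x = x - (2 * (x \<bullet> \<alpha>) / (\<alpha> \<bullet> \<alpha>)) *\<^sub>R \<alpha>"

definition root_system :: "'a::euclidean_space set \<Rightarrow> bool" where
  "root_system R \<longleftrightarrow> finite R \<and> 0 \<notin> R \<and> span R = UNIV \<and>
     (\<forall>\<alpha>\<in>R. rfl \<alpha> ` R = R) \<and>
     (\<forall>\<alpha>\<in>R. \<forall>\<beta>\<in>R. 2 * (\<beta> \<bullet> \<alpha>) / (\<alpha> \<bullet> \<alpha>) \<in> \<int>)"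

definition nn_comb :: "'a::euclidean_space set \<Rightarrow> 'a \<Rightarrow> bool" where
  "nn_comb Sr x \<longleftrightarrow> (\<exists>c::'a \<Rightarrow> nat. x = (\<Sum>\<alpha>\<in>Sr. real (c \<alpha>) *\<^sub>R \<alpha>))"

definition is_base :: "'a::euclidean_space set \<Rightarrow> 'a set \<Rightarrow> bool" where
  "is_base R Sr \<longleftrightarrow> Sr \<subseteq> R \<and> independent Sr \<and>
     (\<forall>\<beta>\<in>R. nn_comb Sr \<beta> \<or> nn_comb Sr (- \<beta>))"

definition pos_roots :: "'a::euclidean_space set \<Rightarrow> 'a set \<Rightarrow> 'a set" where
  "pos_roots R Sr = {\<beta>\<in>R. nn_comb Sr \<beta>}"

text \<open>Group generated by a set of maps (all of them involutions here).\<close>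
inductive_set gen_by :: "('a \<Rightarrow> 'a) set \<Rightarrow> ('a \<Rightarrow> 'a) set" for T where
  gen_id: "id \<in> gen_by T"
| gen_step: "t \<in> T \<Longrightarrow> w \<in> gen_by T \<Longrightarrow> t \<circ> w \<in> gen_by T"

definition weyl :: "'a::euclidean_space set \<Rightarrow> ('a \<Rightarrow> 'a) set" where
  "weyl R = gen_by (rfl ` R)"

definition simple_refls :: "'a::euclidean_space set \<Rightarrow> ('a \<Rightarrow> 'a) set" where
  "simple_refls Sr = rfl ` Sr"

definition word_len :: "('a \<Rightarrow> 'a) set \<Rightarrow> ('a \<Rightarrow> 'a) \<Rightarrow> nat" where
  "word_len S w = (LEAST n. \<exists>ts. set ts \<subseteq> S \<and> length ts = n \<and> w = foldr (\<circ>) ts id)"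

definition bruhat_step :: "'a::euclidean_space set \<Rightarrow> 'a set \<Rightarrow> ('a \<Rightarrow> 'a) \<Rightarrow> ('a \<Rightarrow> 'a) \<Rightarrow> bool" where
  "bruhat_step R Sr u w \<longleftrightarrow> u \<in> weyl R \<and> w \<in> weyl R \<and>
     (\<exists>\<alpha>\<in>R. w = rfl \<alpha> \<circ> u) \<and>
     word_len (simple_refls Sr) u < word_len (simple_refls Sr) w"

definition bruhat_le :: "'a::euclidean_space set \<Rightarrow> 'a set \<Rightarrow> ('a \<Rightarrow> 'a) \<Rightarrow> ('a \<Rightarrow> 'a) \<Rightarrow> bool" where
  "bruhat_le R Sr = (bruhat_step R Sr)\<^sup>*\<^sup>*"

definition weight_lattice :: "'a::euclidean_space set \<Rightarrow> 'a set" where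
  "weight_lattice R = {x. \<forall>\<alpha>\<in>R. 2 * (x \<bullet> \<alpha>) / (\<alpha> \<bullet> \<alpha>) \<in> \<int>}"

definition dominant :: "'a::euclidean_space set \<Rightarrow> 'a set \<Rightarrow> 'a set" where
  "dominant R Sr = {x \<in> weight_lattice R. \<forall>\<alpha>\<in>pos_roots R Sr. x \<bullet> \<alpha> \<ge> 0}"

text \<open>lambda_+ : the unique dominant element of the W-orbit.\<close>
definition dom_rep :: "'a::euclidean_space set \<Rightarrow> 'a set \<Rightarrow> 'a \<Rightarrow> 'a" where
  "dom_rep R Sr x = (THE y. y \<in> dominant R Sr \<and> (\<exists>w\<in>weyl R. w x = y))"

definition vbar :: "'a::euclidean_space set \<Rightarrow> 'a set \<Rightarrow> 'a \<Rightarrow> ('a \<Rightarrow> 'a)" where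
  "vbar R Sr x = (THE w. w \<in> weyl R \<and> w (dom_rep R Sr x) = x \<and>
      (\<forall>w'\<in>weyl R. w' (dom_rep R Sr x) = x \<longrightarrow>
          word_len (simple_refls Sr) w \<le> word_len (simple_refls Sr) w'))"

definition dom_order :: "'a::euclidean_space set \<Rightarrow> 'a \<Rightarrow> 'a \<Rightarrow> bool" where
  "dom_order Sr x y \<longleftrightarrow> nn_comb Sr (y - x)"

definition le_empty :: "'a::euclidean_space set \<Rightarrow> 'a set \<Rightarrow> 'a \<Rightarrow> 'a \<Rightarrow> bool" where
  "le_empty R Sr x y \<longleftrightarrow> dom_order Sr (dom_rep R Sr x) (dom_rep R Sr y) \<and>
     (dom_rep R Sr x = dom_rep R Sr y \<longrightarrow> bruhat_le R Sr (vbar R Sr x) (vbar R Sr y))"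

definition less_empty :: "'a::euclidean_space set \<Rightarrow> 'a set \<Rightarrow> 'a \<Rightarrow> 'a \<Rightarrow> bool" where
  "less_empty R Sr x y \<longleftrightarrow> le_empty R Sr x y \<and> x \<noteq> y"

definition par_simple :: "'a::euclidean_space set \<Rightarrow> ('a \<Rightarrow> 'a) set \<Rightarrow> 'a set" where
  "par_simple Sr I = {\<alpha>\<in>Sr. rfl \<alpha> \<in> I}"

definition par_pos_roots :: "'a::euclidean_space set \<Rightarrow> 'a set \<Rightarrow> ('a \<Rightarrow> 'a) set \<Rightarrow> 'a set" where
  "par_pos_roots R Sr I = {\<beta>\<in>R. nn_comb (par_simple Sr I) \<beta>}"

definition par_weyl :: "('a \<Rightarrow> 'a) set \<Rightarrow> ('a \<Rightarrow> 'a) set" where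
  "par_weyl I = gen_by I"

definition par_dominant :: "'a::euclidean_space set \<Rightarrow> 'a set \<Rightarrow> ('a \<Rightarrow> 'a) set \<Rightarrow> 'a set" where
  "par_dominant R Sr I = {x \<in> weight_lattice R. \<forall>\<alpha>\<in>par_pos_roots R Sr I. x \<bullet> \<alpha> \<ge> 0}"

definition par_rep :: "'a::euclidean_space set \<Rightarrow> 'a set \<Rightarrow> ('a \<Rightarrow> 'a) set \<Rightarrow> 'a \<Rightarrow> 'a" where
  "par_rep R Sr I x = (THE y. y \<in> par_dominant R Sr I \<and> (\<exists>w\<in>par_weyl I. w x = y))"

end

theory Submission
  imports Defs
begin

text \<open>
  Let \<rho> = \<mu>_+ and let v = v-bar(\<mu>) be the shortest element of W with v \<rho> = \<mu>. If \<mu> is not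
  I-dominant, choose a simple root \<alpha> of I with (\<mu>, \<alpha>) < 0. By the deletion condition
  s_\<alpha> v is shorter than v, and it is the shortest element carrying \<rho> to s_\<alpha> \<mu>; hence
  v-bar(s_\<alpha> \<mu>) = s_\<alpha> v lies below v-bar(\<mu>) in the Bruhat order. As s_\<alpha> \<mu> is negative on
  fewer positive roots, iterating reaches \<mu>_{I,+} with v-bar(\<mu>_{I,+}) \<le> v-bar(\<mu>) \<le> v-bar(\<lambda>).
  If \<mu>_{I,+} were \<lambda>, then v-bar(\<mu>) = v-bar(\<lambda>) by comparing lengths, so \<mu> = \<lambda>.

  The descriptions of \<lambda>_+ and v-bar are well defined because dominant conjugates and
  shortest elements over a dominant weight are unique; both facts also rest on the
  deletion condition.
\<close>

section \<open>Reflections\<close>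

lemma rfl_rfl: "(\<alpha>::'a::euclidean_space) \<noteq> 0 \<Longrightarrow> rfl \<alpha> (rfl \<alpha> x) = x"
  unfolding rfl_def by (simp add: inner_diff_left algebra_simps)

lemma rfl_self: "(\<alpha>::'a::euclidean_space) \<noteq> 0 \<Longrightarrow> rfl \<alpha> \<alpha> = - \<alpha>"
  unfolding rfl_def by (simp add: algebra_simps scaleR_2)

lemma rfl_scaleR: "c \<noteq> 0 \<Longrightarrow> rfl (c *\<^sub>R (\<alpha>::'a::euclidean_space)) = rfl \<alpha>"
  unfolding rfl_def by (rule ext) (simp add: field_simps power2_eq_square)

lemma rfl_uminus: "rfl (- (\<alpha>::'a::euclidean_space)) = rfl \<alpha>"
  using rfl_scaleR[of "-1" \<alpha>] by simp

lemma rfl_orthogonal: "x \<bullet> \<alpha> = 0 \<Longrightarrow> rfl \<alpha> x = x"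
  unfolding rfl_def by simp

lemma inner_rfl_rfl: "(\<alpha>::'a::euclidean_space) \<noteq> 0 \<Longrightarrow> rfl \<alpha> x \<bullet> rfl \<alpha> y = x \<bullet> y"
  unfolding rfl_def by (simp add: inner_diff_left inner_diff_right inner_commute field_simps)

lemma inner_rfl_left_self: "(\<alpha>::'a::euclidean_space) \<noteq> 0 \<Longrightarrow> rfl \<alpha> x \<bullet> \<alpha> = - (x \<bullet> \<alpha>)"
  unfolding rfl_def by (simp add: inner_diff_left)

lemma linear_rfl: "linear (rfl (\<alpha>::'a::euclidean_space))"
  unfolding rfl_def
  by (rule linearI) (simp_all add: inner_add_left algebra_simps add_divide_distrib scaleR_add_left)

lemma isometry_rfl:
  fixes a :: "'a::euclidean_space \<Rightarrow> 'a"
  assumes "linear a" "\<And>x y. a x \<bullet> a y = x \<bullet> y"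
  shows "a (rfl \<beta> x) = rfl (a \<beta>) (a x)"
  using assms unfolding rfl_def by (simp add: linear_diff linear_scale)

lemma rfl_rfl_conj:
  assumes "(\<alpha>::'a::euclidean_space) \<noteq> 0"
  shows "rfl (rfl \<alpha> \<beta>) = rfl \<alpha> \<circ> rfl \<beta> \<circ> rfl \<alpha>"
proof
  fix z
  have "rfl \<alpha> (rfl \<beta> (rfl \<alpha> z)) = rfl (rfl \<alpha> \<beta>) (rfl \<alpha> (rfl \<alpha> z))"
    using isometry_rfl[OF linear_rfl inner_rfl_rfl[OF assms]] .
  then show "rfl (rfl \<alpha> \<beta>) z = (rfl \<alpha> \<circ> rfl \<beta> \<circ> rfl \<alpha>) z" using rfl_rfl[OF assms] by simp
qed

section \<open>Groups generated by involutions\<close>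

definition comp_list :: "('a \<Rightarrow> 'a) list \<Rightarrow> 'a \<Rightarrow> 'a" where
  "comp_list ts = foldr (\<circ>) ts id"

lemma comp_list_Nil [simp]: "comp_list [] = id"
  by (simp add: comp_list_def)

lemma comp_list_Cons [simp]: "comp_list (t # ts) = t \<circ> comp_list ts"
  by (simp add: comp_list_def)

lemma word_len_eq_Least: "word_len T w = (LEAST n. \<exists>ts. set ts \<subseteq> T \<and> length ts = n \<and> w = comp_list ts)"
  unfolding word_len_def comp_list_def ..

lemma gen_by_generator: "t \<in> T \<Longrightarrow> t \<in> gen_by T"
  using gen_by.gen_step[OF _ gen_by.gen_id] by fastforce

lemma gen_by_comp: "u \<in> gen_by T \<Longrightarrow> w \<in> gen_by T \<Longrightarrow> u \<circ> w \<in> gen_by T"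
  by (induction u rule: gen_by.induct) (auto simp: comp_assoc intro: gen_by.intros)

lemma gen_by_mono: "w \<in> gen_by T \<Longrightarrow> T \<subseteq> T' \<Longrightarrow> w \<in> gen_by T'"
  by (induction w rule: gen_by.induct) (auto intro: gen_by.intros)

lemma gen_by_subgroup: "w \<in> gen_by T \<Longrightarrow> T \<subseteq> gen_by T' \<Longrightarrow> w \<in> gen_by T'"
  by (induction w rule: gen_by.induct) (auto intro: gen_by.intros gen_by_comp)

lemma gen_by_preserves:
  "w \<in> gen_by T \<Longrightarrow> (\<And>t x. t \<in> T \<Longrightarrow> x \<in> A \<Longrightarrow> t x \<in> A) \<Longrightarrow> x \<in> A \<Longrightarrow> w x \<in> A"
  by (induction w rule: gen_by.induct) auto

lemma gen_by_imp_word: "w \<in> gen_by T \<Longrightarrow> \<exists>ts. set ts \<subseteq> T \<and> w = comp_list ts"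
proof (induction w rule: gen_by.induct)
  case gen_id
  show ?case by (rule exI[of _ "[]"]) simp
next
  case (gen_step t w)
  then obtain ts where "set ts \<subseteq> T" "w = comp_list ts" by blast
  with gen_step show ?case by (intro exI[of _ "t # ts"]) (auto simp only: comp_list_Cons set_simps)
qed

lemma comp_list_in_gen_by: "set ts \<subseteq> T \<Longrightarrow> comp_list ts \<in> gen_by T"
  by (induction ts) (auto intro: gen_by.intros)

lemma gen_by_inverse:
  assumes "\<And>t x. t \<in> T \<Longrightarrow> t (t x) = x" "w \<in> gen_by T"
  shows "\<exists>w'\<in>gen_by T. (\<forall>x. w' (w x) = x) \<and> (\<forall>x. w (w' x) = x)"
  using assms(2)
proof (induction w rule: gen_by.induct)
  case gen_id
  show ?case by (intro bexI[of _ id]) (auto intro: gen_by.intros)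
next
  case (gen_step t w)
  then obtain w' where "w' \<in> gen_by T" "\<forall>x. w' (w x) = x" "\<forall>x. w (w' x) = x" by blast
  moreover have "w' \<circ> t \<in> gen_by T"
    using \<open>w' \<in> gen_by T\<close> gen_step(1) by (auto intro: gen_by_comp gen_by_generator)
  moreover have "\<forall>x. t (t x) = x" using gen_step(1) assms(1) by blast
  ultimately show ?case by (intro bexI[of _ "w' \<circ> t"]) auto
qed

lemma reduced_word_exists:
  assumes "w \<in> gen_by T"
  shows "\<exists>ts. set ts \<subseteq> T \<and> length ts = word_len T w \<and> w = comp_list ts"
proof -
  have "\<exists>n ts. set ts \<subseteq> T \<and> length ts = n \<and> w = comp_list ts"
    using gen_by_imp_word[OF assms] by blast
  from LeastI_ex[OF this] show ?thesis unfolding word_len_eq_Least .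
qed

lemma word_len_le_length: "set ts \<subseteq> T \<Longrightarrow> word_len T (comp_list ts) \<le> length ts"
  unfolding word_len_eq_Least by (rule Least_le) blast

lemma word_len_comp_le:
  assumes "t \<in> T" "w \<in> gen_by T"
  shows "word_len T (t \<circ> w) \<le> Suc (word_len T w)"
proof -
  obtain ts where "set ts \<subseteq> T" "length ts = word_len T w" "w = comp_list ts"
    using reduced_word_exists[OF assms(2)] by blast
  then show ?thesis using word_len_le_length[of "t # ts" T] assms(1) by simp
qed

lemma word_len_eq_0_imp_id: "w \<in> gen_by T \<Longrightarrow> word_len T w = 0 \<Longrightarrow> w = id"
  using reduced_word_exists[of w T] by auto

lemma word_len_first_letter:
  assumes "w \<in> gen_by T" "word_len T w \<noteq> 0"
  obtains t w0 where "t \<in> T" "w0 \<in> gen_by T" "w = t \<circ> w0" "word_len T w = Suc (word_len T w0)"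
proof -
  obtain ts where ts: "set ts \<subseteq> T" "length ts = word_len T w" "w = comp_list ts"
    using reduced_word_exists[OF assms(1)] by blast
  then obtain t ts0 where ts0: "ts = t # ts0" using assms(2) by (cases ts) auto
  have "t \<in> T" "comp_list ts0 \<in> gen_by T" using ts ts0 by (auto intro: comp_list_in_gen_by)
  moreover have "word_len T (comp_list ts0) \<le> length ts0" using ts ts0 by (intro word_len_le_length) auto
  moreover have "word_len T w \<le> Suc (word_len T (comp_list ts0))"
    using word_len_comp_le[OF calculation(1,2)] ts(3) ts0 by simp
  ultimately show ?thesis using that ts ts0 by fastforce
qed

lemma gen_by_rfl_span: "w \<in> gen_by (rfl ` B) \<Longrightarrow> v \<in> span B \<Longrightarrow> w v \<in> span B"
  by (erule gen_by_preserves) (auto simp: rfl_def intro: span_diff[OF _ span_scale[OF span_base]])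

lemma bruhat_le_imp_eq_or_shorter:
  "bruhat_le R Sr u w \<Longrightarrow> u = w \<or> word_len (simple_refls Sr) u < word_len (simple_refls Sr) w"
  unfolding bruhat_le_def
  by (induction rule: rtranclp_induct) (auto simp: bruhat_step_def)

lemma bruhat_le_antisym: "bruhat_le R Sr u w \<Longrightarrow> bruhat_le R Sr w u \<Longrightarrow> u = w"
  using bruhat_le_imp_eq_or_shorter[of R Sr u w] bruhat_le_imp_eq_or_shorter[of R Sr w u] by auto

lemma bruhat_le_trans: "bruhat_le R Sr u v \<Longrightarrow> bruhat_le R Sr v w \<Longrightarrow> bruhat_le R Sr u w"
  unfolding bruhat_le_def by (rule rtranclp_trans)

lemma nn_comb_zero: "nn_comb X 0"
  unfolding nn_comb_def by (rule exI[of _ "\<lambda>_. 0"]) simp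

lemma nn_comb_member:
  assumes "finite X" "\<alpha> \<in> X" shows "nn_comb X \<alpha>"
proof -
  have "(\<Sum>\<gamma>\<in>X. real (if \<gamma> = \<alpha> then 1 else 0) *\<^sub>R \<gamma>) = (\<Sum>\<gamma>\<in>X. if \<gamma> = \<alpha> then \<gamma> else 0)"
    by (rule sum.cong) auto
  also have "\<dots> = \<alpha>" using assms by (simp add: sum.delta')
  finally show ?thesis unfolding nn_comb_def by metis
qed

lemma nn_comb_inner_nonneg:
  assumes "\<forall>\<alpha>\<in>X. 0 \<le> x \<bullet> \<alpha>" "nn_comb X \<beta>" shows "0 \<le> x \<bullet> \<beta>"
proof -
  obtain c where c: "\<beta> = (\<Sum>\<gamma>\<in>X. real (c \<gamma>) *\<^sub>R \<gamma>)"
    using assms(2) unfolding nn_comb_def by blast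
  show ?thesis unfolding c inner_sum_right using assms(1) by (auto intro!: sum_nonneg)
qed

section \<open>Root systems with a base\<close>

locale based_root_system =
  fixes R Sr :: "'a::euclidean_space set"
  assumes root_system: "root_system R" and base: "is_base R Sr"
begin

abbreviation W :: "('a \<Rightarrow> 'a) set" where "W \<equiv> gen_by (rfl ` Sr)"

abbreviation len :: "('a \<Rightarrow> 'a) \<Rightarrow> nat" where "len \<equiv> word_len (rfl ` Sr)"

lemma finite_roots: "finite R"
  using root_system unfolding root_system_def by blast

lemma root_nonzero: "\<alpha> \<in> R \<Longrightarrow> \<alpha> \<noteq> 0"
  using root_system unfolding root_system_def by blast

lemma rfl_root: "\<alpha> \<in> R \<Longrightarrow> \<beta> \<in> R \<Longrightarrow> rfl \<alpha> \<beta> \<in> R"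
  using root_system unfolding root_system_def by blast

lemma cartan_integer: "\<alpha> \<in> R \<Longrightarrow> \<beta> \<in> R \<Longrightarrow> 2 * (\<beta> \<bullet> \<alpha>) / (\<alpha> \<bullet> \<alpha>) \<in> \<int>"
  using root_system unfolding root_system_def by blast

lemma uminus_root: "\<alpha> \<in> R \<Longrightarrow> - \<alpha> \<in> R"
  using rfl_root[of \<alpha> \<alpha>] rfl_self root_nonzero by metis

lemma rfl_root_rfl: "\<alpha> \<in> R \<Longrightarrow> rfl \<alpha> (rfl \<alpha> x) = x"
  using rfl_rfl root_nonzero by blast

lemma simple_roots: "Sr \<subseteq> R"
  using base unfolding is_base_def by blast

lemma finite_simple: "finite Sr"
  using finite_roots simple_roots finite_subset by blast

lemma positive_or_negative: "\<beta> \<in> R \<Longrightarrow> nn_comb Sr \<beta> \<or> nn_comb Sr (- \<beta>)"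
  using base unfolding is_base_def by blast

lemma simple_coeffs_unique:
  assumes "(\<Sum>\<gamma>\<in>Sr. a \<gamma> *\<^sub>R \<gamma>) = (\<Sum>\<gamma>\<in>Sr. b \<gamma> *\<^sub>R \<gamma>)" "\<gamma> \<in> Sr"
  shows "a \<gamma> = b \<gamma>"
proof -
  have "(\<Sum>\<gamma>\<in>Sr. (a \<gamma> - b \<gamma>) *\<^sub>R \<gamma>) = 0"
    using assms(1) by (simp add: scaleR_diff_left sum_subtractf)
  moreover have "independent Sr"
    using base unfolding is_base_def by blast
  ultimately show ?thesis
    using assms(2) unfolding independent_explicit by (metis eq_iff_diff_eq_0)
qed

lemma sum_simple_delta: "\<alpha> \<in> Sr \<Longrightarrow> (\<Sum>\<gamma>\<in>Sr. (if \<gamma> = \<alpha> then k else 0) *\<^sub>R \<gamma>) = k *\<^sub>R \<alpha>"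
  using finite_simple by (simp add: if_distrib[of "\<lambda>c. c *\<^sub>R _"] sum.delta' cong: if_cong)

lemma nn_comb_both_imp_zero:
  assumes "nn_comb Sr \<beta>" "nn_comb Sr (- \<beta>)"
  shows "\<beta> = 0"
proof -
  obtain c d where c: "\<beta> = (\<Sum>\<gamma>\<in>Sr. real (c \<gamma>) *\<^sub>R \<gamma>)" and d: "- \<beta> = (\<Sum>\<gamma>\<in>Sr. real (d \<gamma>) *\<^sub>R \<gamma>)"
    using assms unfolding nn_comb_def by blast
  have "(\<Sum>\<gamma>\<in>Sr. real (c \<gamma>) *\<^sub>R \<gamma>) = (\<Sum>\<gamma>\<in>Sr. (- real (d \<gamma>)) *\<^sub>R \<gamma>)"
    using c d by (simp add: sum_negf) (metis minus_minus)
  then have "real (c \<gamma>) = - real (d \<gamma>)" if "\<gamma> \<in> Sr" for \<gamma>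
    by (rule simple_coeffs_unique[OF _ that])
  then have "\<forall>\<gamma>\<in>Sr. c \<gamma> = 0" by force
  then show ?thesis using c by simp
qed

text \<open>Otherwise \<beta> has a positive coefficient at a simple root other than \<alpha>, which s_\<alpha>
  does not change.\<close>
lemma simple_rfl_negative_imp_multiple:
  assumes "\<alpha> \<in> Sr" "nn_comb Sr \<beta>" "nn_comb Sr (- rfl \<alpha> \<beta>)"
  shows "\<exists>c. \<beta> = c *\<^sub>R \<alpha>"
proof -
  obtain c d where c: "\<beta> = (\<Sum>\<gamma>\<in>Sr. real (c \<gamma>) *\<^sub>R \<gamma>)"
    and d: "- rfl \<alpha> \<beta> = (\<Sum>\<gamma>\<in>Sr. real (d \<gamma>) *\<^sub>R \<gamma>)"
    using assms(2,3) unfolding nn_comb_def by blast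
  define k where "k = 2 * (\<beta> \<bullet> \<alpha>) / (\<alpha> \<bullet> \<alpha>)"
  have "(\<Sum>\<gamma>\<in>Sr. (real (c \<gamma>) - (if \<gamma> = \<alpha> then k else 0)) *\<^sub>R \<gamma>) = rfl \<alpha> \<beta>"
    using c sum_simple_delta[OF assms(1), of k]
    by (simp add: rfl_def k_def scaleR_diff_left sum_subtractf)
  also have "\<dots> = (\<Sum>\<gamma>\<in>Sr. (- real (d \<gamma>)) *\<^sub>R \<gamma>)"
    using d by (simp add: sum_negf) (metis minus_minus)
  finally have "real (c \<gamma>) - (if \<gamma> = \<alpha> then k else 0) = - real (d \<gamma>)" if "\<gamma> \<in> Sr" for \<gamma>
    by (rule simple_coeffs_unique[OF _ that])
  then have "\<forall>\<gamma>\<in>Sr. \<gamma> \<noteq> \<alpha> \<longrightarrow> c \<gamma> = 0" by force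
  then have "\<beta> = (\<Sum>\<gamma>\<in>Sr. (if \<gamma> = \<alpha> then real (c \<alpha>) else 0) *\<^sub>R \<gamma>)"
    unfolding c by (intro sum.cong) auto
  then show ?thesis using sum_simple_delta[OF assms(1)] by metis
qed

lemma simple_rfl_positive:
  assumes "\<alpha> \<in> Sr" "\<beta> \<in> R" "nn_comb Sr \<beta>" "\<not> (\<exists>c. \<beta> = c *\<^sub>R \<alpha>)"
  shows "nn_comb Sr (rfl \<alpha> \<beta>)" "rfl \<alpha> \<beta> \<noteq> \<alpha>"
proof -
  have \<alpha>R: "\<alpha> \<in> R" using assms(1) simple_roots by blast
  show "nn_comb Sr (rfl \<alpha> \<beta>)"
    using positive_or_negative[OF rfl_root[OF \<alpha>R assms(2)]]
      simple_rfl_negative_imp_multiple[OF assms(1,3)] assms(4) by blast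
  show "rfl \<alpha> \<beta> \<noteq> \<alpha>"
    using assms(4) rfl_root_rfl[OF \<alpha>R] rfl_self[OF root_nonzero[OF \<alpha>R]] by (metis scaleR_minus1_left)
qed

lemma exists_simple_inner_pos:
  assumes "\<beta> \<noteq> 0" "nn_comb Sr \<beta>"
  shows "\<exists>\<gamma>\<in>Sr. 0 < \<beta> \<bullet> \<gamma>"
proof (rule ccontr)
  assume "\<not> ?thesis"
  then have "0 \<le> (- \<beta>) \<bullet> \<beta>"
    by (intro nn_comb_inner_nonneg[OF _ assms(2)]) (auto simp: not_less)
  then show False using assms(1) by (metis inner_gt_zero_iff inner_minus_left neg_0_le_iff_le not_le)
qed


lemma gen_by_rfl_linear: "w \<in> gen_by (rfl ` X) \<Longrightarrow> linear w"
proof (induction w rule: gen_by.induct)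
  case gen_id
  show ?case by (simp add: linear_id[unfolded id_def])
next
  case (gen_step t w)
  then obtain \<alpha> where "t = rfl \<alpha>" by blast
  then show ?case using linear_compose[OF gen_step.IH linear_rfl] by blast
qed

lemma gen_by_rfl_inner:
  "w \<in> gen_by (rfl ` X) \<Longrightarrow> X \<subseteq> R \<Longrightarrow> w x \<bullet> w y = x \<bullet> y"
  by (induction w rule: gen_by.induct) (auto simp: inner_rfl_rfl root_nonzero subset_iff)

lemma gen_by_rfl_root: "w \<in> gen_by (rfl ` X) \<Longrightarrow> X \<subseteq> R \<Longrightarrow> \<beta> \<in> R \<Longrightarrow> w \<beta> \<in> R"
  by (erule gen_by_preserves) (auto intro: rfl_root)

lemma rfl_weight_lattice:
  assumes "\<alpha> \<in> R" "x \<in> weight_lattice R"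
  shows "rfl \<alpha> x \<in> weight_lattice R"
  unfolding weight_lattice_def mem_Collect_eq
proof
  fix \<beta> assume "\<beta> \<in> R"
  define k where "k = 2 * (x \<bullet> \<alpha>) / (\<alpha> \<bullet> \<alpha>)"
  have "k \<in> \<int>" "2 * (x \<bullet> \<beta>) / (\<beta> \<bullet> \<beta>) \<in> \<int>"
    using assms \<open>\<beta> \<in> R\<close> unfolding weight_lattice_def k_def by blast+
  moreover have "2 * (\<alpha> \<bullet> \<beta>) / (\<beta> \<bullet> \<beta>) \<in> \<int>"
    using cartan_integer[OF \<open>\<beta> \<in> R\<close> assms(1)] .
  ultimately have "2 * (x \<bullet> \<beta>) / (\<beta> \<bullet> \<beta>) - k * (2 * (\<alpha> \<bullet> \<beta>) / (\<beta> \<bullet> \<beta>)) \<in> \<int>"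
    by (intro Ints_diff Ints_mult)
  moreover have "2 * (rfl \<alpha> x \<bullet> \<beta>) / (\<beta> \<bullet> \<beta>)
      = 2 * (x \<bullet> \<beta>) / (\<beta> \<bullet> \<beta>) - k * (2 * (\<alpha> \<bullet> \<beta>) / (\<beta> \<bullet> \<beta>))"
    unfolding rfl_def k_def by (simp add: inner_diff_left diff_divide_distrib)
  ultimately show "2 * (rfl \<alpha> x \<bullet> \<beta>) / (\<beta> \<bullet> \<beta>) \<in> \<int>"
    by simp
qed

lemma gen_by_rfl_weight_lattice:
  "w \<in> gen_by (rfl ` X) \<Longrightarrow> X \<subseteq> R \<Longrightarrow> x \<in> weight_lattice R \<Longrightarrow> w x \<in> weight_lattice R"
  by (erule gen_by_preserves) (auto intro: rfl_weight_lattice)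

lemma gen_by_rfl_inverse:
  assumes "w \<in> gen_by (rfl ` X)" "X \<subseteq> R"
  shows "\<exists>w'\<in>gen_by (rfl ` X). (\<forall>x. w' (w x) = x) \<and> (\<forall>x. w (w' x) = x)"
proof (rule gen_by_inverse[OF _ assms(1)])
  fix t x assume "t \<in> rfl ` X"
  then show "t (t x) = x" using assms(2) rfl_root_rfl by auto
qed

lemma gen_by_rfl_preimage_root:
  assumes "w \<in> gen_by (rfl ` X)" "X \<subseteq> R" "\<alpha> \<in> R"
  shows "\<exists>\<beta>\<in>R. w \<beta> = \<alpha>"
proof -
  obtain w' where "w' \<in> gen_by (rfl ` X)" "\<forall>x. w (w' x) = x"
    using gen_by_rfl_inverse[OF assms(1,2)] by blast
  then show ?thesis using gen_by_rfl_root[OF _ assms(2,3)] by blast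
qed

lemma gen_by_rfl_preimage_span:
  assumes "w \<in> gen_by (rfl ` B)" "B \<subseteq> R" "\<alpha> \<in> B" "w \<beta> = \<alpha>"
  shows "\<beta> \<in> span B"
proof -
  obtain w' where "w' \<in> gen_by (rfl ` B)" "\<forall>x. w' (w x) = x"
    using gen_by_rfl_inverse[OF assms(1,2)] by blast
  then show ?thesis using gen_by_rfl_span span_base[OF assms(3)] assms(4) by metis
qed

lemma W_linear: "w \<in> W \<Longrightarrow> linear w"
  by (rule gen_by_rfl_linear)

lemma W_inner: "w \<in> W \<Longrightarrow> w x \<bullet> w y = x \<bullet> y"
  using gen_by_rfl_inner[OF _ simple_roots] .

lemma simple_rfl_height_less:
  assumes "\<gamma> \<in> Sr" "\<beta> \<in> R" "0 < \<beta> \<bullet> \<gamma>"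
    and "\<beta> = (\<Sum>\<delta>\<in>Sr. real (c \<delta>) *\<^sub>R \<delta>)" "rfl \<gamma> \<beta> = (\<Sum>\<delta>\<in>Sr. real (e \<delta>) *\<^sub>R \<delta>)"
  shows "sum e Sr < sum c Sr"
proof -
  have \<gamma>R: "\<gamma> \<in> R" using assms(1) simple_roots by blast
  define k where "k = 2 * (\<beta> \<bullet> \<gamma>) / (\<gamma> \<bullet> \<gamma>)"
  have "k \<in> \<int>" using cartan_integer[OF \<gamma>R assms(2)] by (simp add: k_def)
  then obtain n where "k = of_int n" by (rule Ints_cases)
  moreover have "k > 0" using assms(3) root_nonzero[OF \<gamma>R] by (simp add: k_def)
  ultimately have k1: "k \<ge> 1" by simp
  have "(\<Sum>\<delta>\<in>Sr. real (e \<delta>) *\<^sub>R \<delta>) = \<beta> - k *\<^sub>R \<gamma>"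
    unfolding assms(5)[symmetric] rfl_def k_def ..
  also have "\<dots> = (\<Sum>\<delta>\<in>Sr. (real (c \<delta>) - (if \<delta> = \<gamma> then k else 0)) *\<^sub>R \<delta>)"
    using assms(4) sum_simple_delta[OF assms(1), of k] by (simp add: scaleR_diff_left sum_subtractf)
  finally have "real (e \<delta>) = real (c \<delta>) - (if \<delta> = \<gamma> then k else 0)" if "\<delta> \<in> Sr" for \<delta>
    by (rule simple_coeffs_unique[OF _ that])
  then have "real (sum e Sr) = real (sum c Sr) - k"
    using assms(1) finite_simple by (simp add: sum_subtractf)
  then show ?thesis using k1 by linarith
qed

lemma rfl_in_W_positive:
  "\<beta> \<in> R \<Longrightarrow> \<beta> = (\<Sum>\<gamma>\<in>Sr. real (c \<gamma>) *\<^sub>R \<gamma>) \<Longrightarrow> rfl \<beta> \<in> W"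
proof (induction "sum c Sr" arbitrary: \<beta> c rule: less_induct)
  case less
  then have "nn_comb Sr \<beta>" unfolding nn_comb_def by blast
  then obtain \<gamma> where \<gamma>: "\<gamma> \<in> Sr" "0 < \<beta> \<bullet> \<gamma>"
    using exists_simple_inner_pos root_nonzero less(2) by blast
  have \<gamma>R: "\<gamma> \<in> R" using \<gamma>(1) simple_roots by blast
  have r\<gamma>: "rfl \<gamma> \<in> W" using \<gamma>(1) by (intro gen_by_generator) auto
  show ?case
  proof (cases "\<exists>t. \<beta> = t *\<^sub>R \<gamma>")
    case True
    then obtain t where "\<beta> = t *\<^sub>R \<gamma>" "t \<noteq> 0" using root_nonzero less(2) by fastforce
    then show ?thesis using r\<gamma> by (simp add: rfl_scaleR)
  next
    case False
    define \<beta>' where "\<beta>' = rfl \<gamma> \<beta>"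
    have \<beta>'R: "\<beta>' \<in> R" using rfl_root[OF \<gamma>R less(2)] \<beta>'_def by simp
    have "nn_comb Sr \<beta>'"
      using simple_rfl_positive(1)[OF \<gamma>(1) less(2) \<open>nn_comb Sr \<beta>\<close> False] \<beta>'_def by simp
    then obtain e where e: "\<beta>' = (\<Sum>\<delta>\<in>Sr. real (e \<delta>) *\<^sub>R \<delta>)" unfolding nn_comb_def by blast
    then have "sum e Sr < sum c Sr"
      using simple_rfl_height_less[OF \<gamma>(1) less(2) \<gamma>(2) less(3), of e] \<beta>'_def by simp
    then have "rfl \<beta>' \<in> W" using less(1)[OF _ \<beta>'R e] by blast
    moreover have "rfl \<beta> = rfl \<gamma> \<circ> rfl \<beta>' \<circ> rfl \<gamma>"
      using rfl_rfl_conj[OF root_nonzero[OF \<gamma>R], of \<beta>'] rfl_root_rfl[OF \<gamma>R] \<beta>'_def by simp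
    ultimately show ?thesis using r\<gamma> by (simp add: gen_by_comp)
  qed
qed

lemma rfl_in_W:
  assumes "\<beta> \<in> R" shows "rfl \<beta> \<in> W"
proof (cases "nn_comb Sr \<beta>")
  case True
  then show ?thesis using rfl_in_W_positive assms unfolding nn_comb_def by blast
next
  case False
  then have "nn_comb Sr (- \<beta>)" using positive_or_negative assms by blast
  then have "rfl (- \<beta>) \<in> W"
    using rfl_in_W_positive uminus_root assms unfolding nn_comb_def by blast
  then show ?thesis by (simp add: rfl_uminus)
qed

lemma weyl_eq_W: "weyl R = W"
proof
  show "weyl R \<subseteq> W"
    unfolding weyl_def using gen_by_subgroup rfl_in_W by blast
  show "W \<subseteq> weyl R"
    unfolding weyl_def using gen_by_mono[OF _ image_mono[OF simple_roots]] by blast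
qed


section \<open>Deletion condition and dominant conjugates\<close>

text \<open>If the first letter s_\<alpha> keeps s_\<alpha> \<gamma> positive, induct and move the reflection in
  s_\<alpha> \<gamma> past s_\<alpha>; otherwise \<gamma> is a multiple of \<alpha> and the first letter itself is deleted.\<close>
lemma word_deletion:
  assumes "set ts \<subseteq> rfl ` Sr" "nn_comb Sr \<gamma>" "\<gamma> \<in> R" "nn_comb Sr (- \<beta>)" "comp_list ts \<beta> = \<gamma>"
  shows "\<exists>ts'. set ts' \<subseteq> set ts \<and> Suc (length ts') = length ts \<and> comp_list ts' = rfl \<gamma> \<circ> comp_list ts"
  using assms
proof (induction ts arbitrary: \<gamma>)
  case Nil
  then show ?case using nn_comb_both_imp_zero root_nonzero by auto
next
  case (Cons s ts)
  then obtain \<alpha> where \<alpha>: "\<alpha> \<in> Sr" "s = rfl \<alpha>" by auto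
  have \<alpha>R: "\<alpha> \<in> R" using \<alpha>(1) simple_roots by blast
  have "s (comp_list ts \<beta>) = \<gamma>" using Cons.prems(5) by simp
  then have ts\<beta>: "comp_list ts \<beta> = s \<gamma>" using \<alpha>(2) rfl_root_rfl[OF \<alpha>R] by metis
  show ?case
  proof (cases "nn_comb Sr (s \<gamma>)")
    case True
    have "set ts \<subseteq> rfl ` Sr" "s \<gamma> \<in> R" using Cons.prems(1,3) \<alpha> rfl_root \<alpha>R by auto
    then obtain ts' where ts': "set ts' \<subseteq> set ts" "Suc (length ts') = length ts"
      "comp_list ts' = rfl (s \<gamma>) \<circ> comp_list ts"
      using Cons.IH[OF _ True _ Cons.prems(4) ts\<beta>] by blast
    have "s \<circ> rfl (s \<gamma>) = rfl \<gamma> \<circ> s"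
      using rfl_rfl_conj[OF root_nonzero[OF \<alpha>R], of \<gamma>] rfl_root_rfl[OF \<alpha>R] \<alpha>(2)
      by (simp add: fun_eq_iff)
    then have "comp_list (s # ts') = rfl \<gamma> \<circ> comp_list (s # ts)"
      using ts'(3) by (simp add: comp_assoc[symmetric])
    then show ?thesis using ts'(1,2) by (intro exI[of _ "s # ts'"]) auto
  next
    case False
    then have "nn_comb Sr (- rfl \<alpha> \<gamma>)"
      using positive_or_negative rfl_root[OF \<alpha>R Cons.prems(3)] \<alpha>(2) by blast
    then obtain c where "\<gamma> = c *\<^sub>R \<alpha>" "c \<noteq> 0"
      using simple_rfl_negative_imp_multiple[OF \<alpha>(1) Cons.prems(2)] root_nonzero[OF Cons.prems(3)]
      by fastforce
    then have "rfl \<gamma> = s" using \<alpha>(2) by (simp add: rfl_scaleR)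
    then have "comp_list ts = rfl \<gamma> \<circ> comp_list (s # ts)"
      using rfl_root_rfl[OF \<alpha>R] \<alpha>(2) by (auto simp: fun_eq_iff)
    moreover have "set ts \<subseteq> set (s # ts)" "Suc (length ts) = length (s # ts)" by auto
    ultimately show ?thesis by blast
  qed
qed

lemma word_len_rfl_comp_less:
  assumes "B \<subseteq> Sr" "w \<in> gen_by (rfl ` B)" "\<alpha> \<in> B" "nn_comb Sr (- \<beta>)" "w \<beta> = \<alpha>"
  shows "word_len (rfl ` B) (rfl \<alpha> \<circ> w) < word_len (rfl ` B) w"
proof -
  obtain ts where ts: "set ts \<subseteq> rfl ` B" "length ts = word_len (rfl ` B) w" "w = comp_list ts"
    using reduced_word_exists[OF assms(2)] by blast
  have "\<alpha> \<in> Sr" using assms(1,3) by blast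
  moreover have "set ts \<subseteq> rfl ` Sr" using ts(1) image_mono[OF assms(1)] by (rule order.trans)
  ultimately
  obtain ts' where "set ts' \<subseteq> set ts" "Suc (length ts') = length ts"
      "comp_list ts' = rfl \<alpha> \<circ> w"
    using word_deletion[of ts \<alpha> \<beta>] nn_comb_member[OF finite_simple] simple_roots assms(4,5) ts(3)
    by blast
  then show ?thesis
    using word_len_le_length[of ts' "rfl ` B"] ts(1,2) by fastforce
qed

lemma positive_preimage_of_simple:
  assumes "B \<subseteq> Sr" "w \<in> gen_by (rfl ` B)" "\<alpha> \<in> B" "\<beta> \<in> R" "w \<beta> = \<alpha>"
    and "word_len (rfl ` B) w \<le> word_len (rfl ` B) (rfl \<alpha> \<circ> w)"
  shows "nn_comb Sr \<beta>"
  using word_len_rfl_comp_less[OF assms(1-3) _ assms(5)] positive_or_negative[OF assms(4)] assms(6)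
  by fastforce

lemma nn_comb_restrict:
  assumes "B \<subseteq> Sr" "v \<in> span B" "nn_comb Sr v"
  shows "nn_comb B v"
proof -
  have "finite B" using finite_simple assms(1) finite_subset by blast
  then obtain u where u: "v = (\<Sum>\<gamma>\<in>B. u \<gamma> *\<^sub>R \<gamma>)" using assms(2) span_finite by blast
  obtain c where c: "v = (\<Sum>\<gamma>\<in>Sr. real (c \<gamma>) *\<^sub>R \<gamma>)"
    using assms(3) unfolding nn_comb_def by blast
  define u' where "u' \<gamma> = (if \<gamma> \<in> B then u \<gamma> else 0)" for \<gamma>
  have "(\<Sum>\<gamma>\<in>Sr. u' \<gamma> *\<^sub>R \<gamma>) = (\<Sum>\<gamma>\<in>B. u' \<gamma> *\<^sub>R \<gamma>)"
    by (rule sum.mono_neutral_right) (use finite_simple assms(1) u'_def in auto)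
  also have "\<dots> = (\<Sum>\<gamma>\<in>Sr. real (c \<gamma>) *\<^sub>R \<gamma>)" unfolding u'_def c[symmetric] u by simp
  finally have "u' \<gamma> = real (c \<gamma>)" if "\<gamma> \<in> Sr" for \<gamma>
    by (rule simple_coeffs_unique[OF _ that])
  then have "\<forall>\<gamma>\<in>Sr - B. c \<gamma> = 0" by (force simp: u'_def)
  then have "v = (\<Sum>\<gamma>\<in>B. real (c \<gamma>) *\<^sub>R \<gamma>)"
    unfolding c by (intro sum.mono_neutral_left[symmetric]) (use finite_simple assms(1) in auto)
  then show ?thesis unfolding nn_comb_def by blast
qed

definition is_dominant :: "'a set \<Rightarrow> 'a \<Rightarrow> bool" where
  "is_dominant B x \<longleftrightarrow> (\<forall>\<beta>\<in>R. nn_comb B \<beta> \<longrightarrow> 0 \<le> x \<bullet> \<beta>)"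

lemma is_dominant_iff_simple:
  assumes "B \<subseteq> Sr"
  shows "is_dominant B x \<longleftrightarrow> (\<forall>\<alpha>\<in>B. 0 \<le> x \<bullet> \<alpha>)"
proof
  assume "is_dominant B x"
  moreover have "\<alpha> \<in> R" "nn_comb B \<alpha>" if "\<alpha> \<in> B" for \<alpha>
    using that assms simple_roots finite_subset[OF assms finite_simple] nn_comb_member by auto
  ultimately show "\<forall>\<alpha>\<in>B. 0 \<le> x \<bullet> \<alpha>" unfolding is_dominant_def by blast
qed (auto simp: is_dominant_def intro: nn_comb_inner_nonneg)

text \<open>Write w = s_\<alpha> w_0 with w_0 shorter. The root \<beta> with w_0 \<beta> = \<alpha> is positive and
  w \<beta> = -\<alpha>; pairing the dominant x and w x with \<beta> and -\<alpha> forces w x \<bullet> \<alpha> = 0, so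
  w_0 x = w x and induction applies.\<close>
lemma dominant_conjugate_eq:
  assumes "B \<subseteq> Sr" "w \<in> gen_by (rfl ` B)" "is_dominant B x" "is_dominant B (w x)"
  shows "w x = x"
  using assms(2,4)
proof (induction "word_len (rfl ` B) w" arbitrary: w rule: less_induct)
  case less
  have BR: "B \<subseteq> R" using assms(1) simple_roots by blast
  show ?case
  proof (cases "word_len (rfl ` B) w = 0")
    case True
    then show ?thesis using word_len_eq_0_imp_id less.prems(1) by fastforce
  next
    case False
    then obtain s w0 where w0: "s \<in> rfl ` B" "w0 \<in> gen_by (rfl ` B)" "w = s \<circ> w0"
      "word_len (rfl ` B) w = Suc (word_len (rfl ` B) w0)"
      using word_len_first_letter[OF less.prems(1)] by blast
    then obtain \<alpha> where \<alpha>: "\<alpha> \<in> B" "s = rfl \<alpha>" by blast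
    have \<alpha>R: "\<alpha> \<in> R" using \<alpha>(1) BR by blast
    obtain \<beta> where \<beta>: "\<beta> \<in> R" "w0 \<beta> = \<alpha>"
      using gen_by_rfl_preimage_root[OF w0(2) BR \<alpha>R] by blast
    have "\<beta> \<in> span B" using gen_by_rfl_preimage_span[OF w0(2) BR \<alpha>(1) \<beta>(2)] .
    moreover have "nn_comb Sr \<beta>"
      using positive_preimage_of_simple[OF assms(1) w0(2) \<alpha>(1) \<beta>] w0(3,4) \<alpha>(2) by simp
    ultimately have "0 \<le> x \<bullet> \<beta>"
      using nn_comb_restrict[OF assms(1)] assms(3) \<beta>(1) unfolding is_dominant_def by blast
    moreover have "w x \<bullet> w \<beta> = x \<bullet> \<beta>"
      using gen_by_rfl_inner[OF less.prems(1) BR] .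
    moreover have "w \<beta> = - \<alpha>" using w0(3) \<beta>(2) \<alpha>(2) rfl_self[OF root_nonzero[OF \<alpha>R]] by simp
    moreover have "0 \<le> w x \<bullet> \<alpha>"
      using less.prems(2) \<alpha>(1) assms(1) unfolding is_dominant_iff_simple[OF assms(1)] by blast
    ultimately have "w x \<bullet> \<alpha> = 0" by simp
    then have "s (w x) = w x" using \<alpha>(2) rfl_orthogonal by simp
    then have "w0 x = w x" using w0(3) \<alpha>(2) rfl_root_rfl[OF \<alpha>R] by (metis comp_apply)
    moreover have "w0 x = x"
      using less.hyps[OF _ w0(2)] w0(4) less.prems(2) calculation by simp
    ultimately show ?thesis by simp
  qed
qed

lemma positive_multiple_of_simple:
  assumes "\<alpha> \<in> Sr" "nn_comb Sr (c *\<^sub>R \<alpha>)" "c \<noteq> 0"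
  shows "c > 0"
proof -
  obtain d where "c *\<^sub>R \<alpha> = (\<Sum>\<gamma>\<in>Sr. real (d \<gamma>) *\<^sub>R \<gamma>)"
    using assms(2) unfolding nn_comb_def by blast
  then have "(\<Sum>\<gamma>\<in>Sr. real (d \<gamma>) *\<^sub>R \<gamma>) = (\<Sum>\<gamma>\<in>Sr. (if \<gamma> = \<alpha> then c else 0) *\<^sub>R \<gamma>)"
    using sum_simple_delta[OF assms(1)] by simp
  then have "real (d \<alpha>) = (if \<alpha> = \<alpha> then c else 0)"
    by (rule simple_coeffs_unique[OF _ assms(1)])
  then show ?thesis using assms(3) by simp
qed

definition neg_count :: "'a \<Rightarrow> nat" where
  "neg_count x = card {\<beta>\<in>R. nn_comb Sr \<beta> \<and> x \<bullet> \<beta> < 0}"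

text \<open>The simple reflection s_\<alpha> maps the positive roots on which s_\<alpha> x is negative
  injectively to those, other than \<alpha>, on which x is negative.\<close>
lemma neg_count_rfl_less:
  assumes "\<alpha> \<in> Sr" "x \<bullet> \<alpha> < 0"
  shows "neg_count (rfl \<alpha> x) < neg_count x"
proof -
  have \<alpha>R: "\<alpha> \<in> R" using assms(1) simple_roots by blast
  define A where "A = {\<beta>\<in>R. nn_comb Sr \<beta> \<and> rfl \<alpha> x \<bullet> \<beta> < 0}"
  define C where "C = {\<beta>\<in>R. nn_comb Sr \<beta> \<and> x \<bullet> \<beta> < 0}"
  have "rfl \<alpha> ` A \<subseteq> C - {\<alpha>}"
  proof
    fix z assume "z \<in> rfl \<alpha> ` A"
    then obtain \<beta> where \<beta>: "\<beta> \<in> R" "nn_comb Sr \<beta>" "rfl \<alpha> x \<bullet> \<beta> < 0" "z = rfl \<alpha> \<beta>"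
      unfolding A_def by blast
    have not_multiple: "\<not> (\<exists>c. \<beta> = c *\<^sub>R \<alpha>)"
    proof
      assume "\<exists>c. \<beta> = c *\<^sub>R \<alpha>"
      then obtain c where c: "\<beta> = c *\<^sub>R \<alpha>" by blast
      then have "c > 0"
        using positive_multiple_of_simple[OF assms(1)] \<beta>(2) root_nonzero[OF \<beta>(1)] by fastforce
      then have "0 < rfl \<alpha> x \<bullet> \<beta>"
        using c assms(2) inner_rfl_left_self[OF root_nonzero[OF \<alpha>R]] by (simp add: mult_pos_neg)
      then show False using \<beta>(3) by simp
    qed
    have "z \<in> R" using \<beta>(1,4) rfl_root \<alpha>R by blast
    moreover have "nn_comb Sr z" "z \<noteq> \<alpha>"
      using simple_rfl_positive[OF assms(1) \<beta>(1,2) not_multiple] \<beta>(4) by simp_all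
    moreover have "x \<bullet> z < 0"
      using inner_rfl_rfl[OF root_nonzero[OF \<alpha>R], of "rfl \<alpha> x" \<beta>] rfl_root_rfl[OF \<alpha>R] \<beta>(3,4)
      by simp
    ultimately show "z \<in> C - {\<alpha>}" unfolding C_def by blast
  qed
  moreover have "inj_on (rfl \<alpha>) A"
    using rfl_root_rfl[OF \<alpha>R] by (metis inj_onI)
  moreover have "finite C" "\<alpha> \<in> C"
    using finite_roots \<alpha>R nn_comb_member[OF finite_simple assms(1)] assms(2) by (auto simp: C_def)
  ultimately have "card A < card C"
    by (metis card_Diff1_less card_image card_mono finite_Diff order_le_less_trans)
  then show ?thesis unfolding neg_count_def A_def C_def .
qed

lemma exists_dominant_conjugate:
  assumes "B \<subseteq> Sr"
  shows "\<exists>w\<in>gen_by (rfl ` B). is_dominant B (w x)"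
proof (induction "neg_count x" arbitrary: x rule: less_induct)
  case less
  show ?case
  proof (cases "is_dominant B x")
    case True
    then show ?thesis by (intro bexI[of _ id]) (auto intro: gen_by.gen_id)
  next
    case False
    then obtain \<alpha> where \<alpha>: "\<alpha> \<in> B" "x \<bullet> \<alpha> < 0"
      unfolding is_dominant_iff_simple[OF assms] by (auto simp: not_le)
    then have "neg_count (rfl \<alpha> x) < neg_count x" using neg_count_rfl_less assms by blast
    then obtain w where "w \<in> gen_by (rfl ` B)" "is_dominant B (w (rfl \<alpha> x))" using less by blast
    moreover have "rfl \<alpha> \<in> gen_by (rfl ` B)" using \<alpha>(1) by (intro gen_by_generator) auto
    ultimately show ?thesis by (intro bexI[of _ "w \<circ> rfl \<alpha>"]) (auto intro: gen_by_comp)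
  qed
qed

section \<open>Shortest elements\<close>

definition shortest :: "'a \<Rightarrow> 'a \<Rightarrow> ('a \<Rightarrow> 'a) \<Rightarrow> bool" where
  "shortest y x v \<longleftrightarrow> v \<in> W \<and> v y = x \<and> (\<forall>w\<in>W. w y = x \<longrightarrow> len v \<le> len w)"

lemma shortest_exists: "w \<in> W \<Longrightarrow> w y = x \<Longrightarrow> \<exists>v. shortest y x v"
  unfolding shortest_def using ex_has_least_nat[of "\<lambda>w. w \<in> W \<and> w y = x" w len] by blast

lemma shortest_rfl:
  assumes "is_dominant Sr y" "shortest y x v" "\<alpha> \<in> Sr" "x \<bullet> \<alpha> < 0"
  shows "len (rfl \<alpha> \<circ> v) < len v" "shortest y (rfl \<alpha> x) (rfl \<alpha> \<circ> v)"
proof -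
  have v: "v \<in> W" "v y = x" "\<forall>w\<in>W. w y = x \<longrightarrow> len v \<le> len w"
    using assms(2) unfolding shortest_def by auto
  have \<alpha>R: "\<alpha> \<in> R" using assms(3) simple_roots by blast
  obtain \<beta> where \<beta>: "\<beta> \<in> R" "v \<beta> = \<alpha>"
    using gen_by_rfl_preimage_root[OF v(1) simple_roots \<alpha>R] by blast
  have "y \<bullet> \<beta> = x \<bullet> \<alpha>" using W_inner[OF v(1)] v(2) \<beta>(2) by metis
  then have "\<not> nn_comb Sr \<beta>" using assms(1,4) \<beta>(1) unfolding is_dominant_def by force
  then have "nn_comb Sr (- \<beta>)" using positive_or_negative \<beta>(1) by blast
  then show shorter: "len (rfl \<alpha> \<circ> v) < len v"
    using word_len_rfl_comp_less[OF order_refl v(1) assms(3) _ \<beta>(2)] by blast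
  have s: "rfl \<alpha> \<in> W" using assms(3) by (intro gen_by_generator) auto
  show "shortest y (rfl \<alpha> x) (rfl \<alpha> \<circ> v)"
    unfolding shortest_def
  proof (intro conjI ballI impI)
    show "rfl \<alpha> \<circ> v \<in> W" using gen_by_comp[OF s v(1)] .
    show "(rfl \<alpha> \<circ> v) y = rfl \<alpha> x" using v(2) by simp
    fix w assume w: "w \<in> W" "w y = rfl \<alpha> x"
    then have "len v \<le> len (rfl \<alpha> \<circ> w)"
      using v(3) gen_by_comp[OF s w(1)] rfl_root_rfl[OF \<alpha>R] by simp
    also have "\<dots> \<le> Suc (len w)" using word_len_comp_le[OF _ w(1)] assms(3) by blast
    finally show "len (rfl \<alpha> \<circ> v) \<le> len w" using shorter by simp
  qed
qed

lemma shortest_first_letter: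
  assumes "is_dominant Sr y" "shortest y x v" "\<alpha> \<in> Sr" "v0 \<in> W"
    and "v = rfl \<alpha> \<circ> v0" "len v = Suc (len v0)"
  shows "x \<bullet> \<alpha> < 0" "shortest y (rfl \<alpha> x) v0"
proof -
  have v: "v \<in> W" "v y = x" "\<forall>w\<in>W. w y = x \<longrightarrow> len v \<le> len w"
    using assms(2) unfolding shortest_def by auto
  have \<alpha>R: "\<alpha> \<in> R" using assms(3) simple_roots by blast
  have s: "rfl \<alpha> \<in> W" using assms(3) by (intro gen_by_generator) auto
  have v0y: "v0 y = rfl \<alpha> x" using v(2) assms(5) rfl_root_rfl[OF \<alpha>R] by auto
  show "shortest y (rfl \<alpha> x) v0"
    unfolding shortest_def
  proof (intro conjI ballI impI assms(4) v0y)
    fix w assume w: "w \<in> W" "w y = rfl \<alpha> x"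
    then have "len v \<le> len (rfl \<alpha> \<circ> w)"
      using v(3) gen_by_comp[OF s w(1)] rfl_root_rfl[OF \<alpha>R] by simp
    also have "\<dots> \<le> Suc (len w)" using word_len_comp_le[OF _ w(1)] assms(3) by blast
    finally show "len v0 \<le> len w" using assms(6) by simp
  qed
  obtain \<beta> where \<beta>: "\<beta> \<in> R" "v \<beta> = \<alpha>"
    using gen_by_rfl_preimage_root[OF v(1) simple_roots \<alpha>R] by blast
  have "v0 \<beta> = - \<alpha>"
    using \<beta>(2) assms(5) rfl_root_rfl[OF \<alpha>R] rfl_self[OF root_nonzero[OF \<alpha>R]] by (metis comp_apply)
  then have "v0 (- \<beta>) = \<alpha>" using linear_neg[OF W_linear[OF assms(4)]] by simp
  then have "nn_comb Sr (- \<beta>)"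
    using positive_preimage_of_simple[OF order_refl assms(4,3) uminus_root[OF \<beta>(1)]] assms(5,6)
    by simp
  then have "0 \<le> y \<bullet> (- \<beta>)" using assms(1) uminus_root[OF \<beta>(1)] unfolding is_dominant_def by blast
  moreover have "y \<bullet> \<beta> = x \<bullet> \<alpha>" using W_inner[OF v(1)] v(2) \<beta>(2) by metis
  moreover have "x \<bullet> \<alpha> \<noteq> 0"
  proof
    assume "x \<bullet> \<alpha> = 0"
    then have "v0 y = x" using v0y rfl_orthogonal by simp
    then show False using v(3) assms(4,6) by fastforce
  qed
  ultimately show "x \<bullet> \<alpha> < 0" by simp
qed

text \<open>Both shortest elements start with a simple reflection s_\<alpha> with x \<bullet> \<alpha> < 0, and
  removing it gives shortest elements for s_\<alpha> x.\<close>
lemma shortest_unique: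
  assumes "is_dominant Sr y" "shortest y x v" "shortest y x v'"
  shows "v = v'"
  using assms(2,3)
proof (induction "len v" arbitrary: x v v' rule: less_induct)
  case less
  have "len v \<le> len v'" "len v' \<le> len v" using less.prems unfolding shortest_def by auto
  then have len_eq: "len v = len v'" by simp
  show ?case
  proof (cases "len v = 0")
    case True
    then show ?thesis using word_len_eq_0_imp_id less.prems len_eq unfolding shortest_def by metis
  next
    case False
    then obtain s v0 where v0: "s \<in> rfl ` Sr" "v0 \<in> W" "v = s \<circ> v0" "len v = Suc (len v0)"
      using word_len_first_letter less.prems(1) unfolding shortest_def by blast
    then obtain \<alpha> where \<alpha>: "\<alpha> \<in> Sr" "s = rfl \<alpha>" by blast
    have "x \<bullet> \<alpha> < 0" "shortest y (rfl \<alpha> x) v0"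
      using shortest_first_letter[OF assms(1) less.prems(1) \<alpha>(1) v0(2)] v0(3,4) \<alpha>(2) by auto
    moreover have "len (rfl \<alpha> \<circ> v') < len v'" "shortest y (rfl \<alpha> x) (rfl \<alpha> \<circ> v')"
      using shortest_rfl[OF assms(1) less.prems(2) \<alpha>(1) calculation(1)] by auto
    ultimately have "v0 = rfl \<alpha> \<circ> v'" using less.hyps v0(4) by simp
    then show ?thesis
      using v0(3) \<alpha>(2) rfl_root_rfl[OF simple_roots[THEN subsetD, OF \<alpha>(1)]] by (auto simp: fun_eq_iff)
  qed
qed


lemma descent_to_dominant:
  assumes "is_dominant Sr y" "B \<subseteq> Sr" "shortest y x v"
  shows "\<exists>u v'. u \<in> gen_by (rfl ` B) \<and> is_dominant B (u x) \<and> shortest y (u x) v' \<and>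
    bruhat_le R Sr v' v"
  using assms(3)
proof (induction "neg_count x" arbitrary: x v rule: less_induct)
  case less
  show ?case
  proof (cases "is_dominant B x")
    case True
    then show ?thesis using less.prems gen_by.gen_id unfolding bruhat_le_def by fastforce
  next
    case False
    then obtain \<alpha> where \<alpha>: "\<alpha> \<in> B" "x \<bullet> \<alpha> < 0"
      unfolding is_dominant_iff_simple[OF assms(2)] by (auto simp: not_le)
    have \<alpha>S: "\<alpha> \<in> Sr" using \<alpha>(1) assms(2) by blast
    have shorter: "len (rfl \<alpha> \<circ> v) < len v" "shortest y (rfl \<alpha> x) (rfl \<alpha> \<circ> v)"
      using shortest_rfl[OF assms(1) less.prems \<alpha>S \<alpha>(2)] by auto
    have "v = rfl \<alpha> \<circ> (rfl \<alpha> \<circ> v)"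
      using rfl_root_rfl simple_roots \<alpha>S by (auto simp: fun_eq_iff)
    then have "bruhat_step R Sr (rfl \<alpha> \<circ> v) v"
      using shorter less.prems simple_roots \<alpha>S
      unfolding bruhat_step_def simple_refls_def weyl_eq_W shortest_def by blast
    moreover obtain u v' where "u \<in> gen_by (rfl ` B)" "is_dominant B (u (rfl \<alpha> x))"
      "shortest y (u (rfl \<alpha> x)) v'" "bruhat_le R Sr v' (rfl \<alpha> \<circ> v)"
      using less.hyps[OF neg_count_rfl_less[OF \<alpha>S \<alpha>(2)] shorter(2)] by blast
    moreover have "rfl \<alpha> \<in> gen_by (rfl ` B)" using \<alpha>(1) by (intro gen_by_generator) auto
    ultimately show ?thesis
      unfolding bruhat_le_def
      by (intro exI[of _ "u \<circ> rfl \<alpha>"] exI[of _ v']) (auto intro: gen_by_comp rtranclp.rtrancl_into_rtrancl)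
  qed
qed

section \<open>Dominant representatives\<close>

lemma rfl_image_par_simple: "I \<subseteq> rfl ` Sr \<Longrightarrow> rfl ` par_simple Sr I = I"
  unfolding par_simple_def by blast

lemma par_simple_all: "par_simple Sr (rfl ` Sr) = Sr"
  unfolding par_simple_def by blast

lemma dominant_iff: "x \<in> dominant R Sr \<longleftrightarrow> x \<in> weight_lattice R \<and> is_dominant Sr x"
  by (auto simp: dominant_def pos_roots_def is_dominant_def)

lemma par_dominant_iff:
  "x \<in> par_dominant R Sr I \<longleftrightarrow> x \<in> weight_lattice R \<and> is_dominant (par_simple Sr I) x"
  by (auto simp: par_dominant_def par_pos_roots_def is_dominant_def)

lemma par_rep_eqI:
  assumes "I \<subseteq> rfl ` Sr" "z \<in> par_dominant R Sr I" "u \<in> gen_by I" "u x = z"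
  shows "par_rep R Sr I x = z"
  unfolding par_rep_def par_weyl_def
proof (rule the_equality)
  show "z \<in> par_dominant R Sr I \<and> (\<exists>w\<in>gen_by I. w x = z)" using assms(2-4) by blast
  fix z' assume z': "z' \<in> par_dominant R Sr I \<and> (\<exists>w\<in>gen_by I. w x = z')"
  let ?B = "par_simple Sr I"
  have B: "?B \<subseteq> Sr" "?B \<subseteq> R" "rfl ` ?B = I"
    using rfl_image_par_simple[OF assms(1)] simple_roots by (auto simp: par_simple_def)
  obtain w where w: "w \<in> gen_by (rfl ` ?B)" "w x = z'" using z' unfolding B(3) by blast
  obtain u' where u': "u' \<in> gen_by (rfl ` ?B)" "\<forall>x. u' (u x) = x"
    using gen_by_rfl_inverse[OF _ B(2)] assms(3) unfolding B(3) by blast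
  have "(w \<circ> u') z = z'" using u' w assms(4) by auto
  moreover have "(w \<circ> u') z = z"
    using dominant_conjugate_eq[OF B(1) gen_by_comp[OF w(1) u'(1)]] assms(2) z' calculation
    unfolding par_dominant_iff by auto
  ultimately show "z' = z" by simp
qed

lemma dom_rep_eqI:
  assumes "y \<in> dominant R Sr" "w \<in> W" "w x = y"
  shows "dom_rep R Sr x = y"
proof -
  have "dom_rep R Sr = par_rep R Sr (rfl ` Sr)"
    unfolding dom_rep_def par_rep_def par_weyl_def weyl_eq_W dominant_def par_dominant_def
      pos_roots_def par_pos_roots_def par_simple_all ..
  moreover have "y \<in> par_dominant R Sr (rfl ` Sr)"
    using assms(1) unfolding dominant_iff par_dominant_iff par_simple_all .
  ultimately show ?thesis using par_rep_eqI[OF order_refl _ assms(2,3)] by simp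
qed

lemma shortest_dom_rep: "y \<in> dominant R Sr \<Longrightarrow> shortest y x v \<Longrightarrow> dom_rep R Sr x = y"
  unfolding shortest_def using gen_by_rfl_inverse[OF _ simple_roots] dom_rep_eqI by metis

lemma shortest_vbar:
  assumes "y \<in> dominant R Sr" "shortest y x v"
  shows "vbar R Sr x = v"
  unfolding vbar_def shortest_dom_rep[OF assms]
proof (rule the_equality)
  have "shortest y x v' \<longleftrightarrow> v' \<in> weyl R \<and> v' y = x \<and>
      (\<forall>w'\<in>weyl R. w' y = x \<longrightarrow> word_len (simple_refls Sr) v' \<le> word_len (simple_refls Sr) w')" for v'
    unfolding shortest_def weyl_eq_W simple_refls_def ..
  then show "v \<in> weyl R \<and> v y = x \<and>
      (\<forall>w'\<in>weyl R. w' y = x \<longrightarrow> word_len (simple_refls Sr) v \<le> word_len (simple_refls Sr) w')"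
    and "\<And>v'. v' \<in> weyl R \<and> v' y = x \<and>
      (\<forall>w'\<in>weyl R. w' y = x \<longrightarrow> word_len (simple_refls Sr) v' \<le> word_len (simple_refls Sr) w') \<Longrightarrow>
      v' = v"
    using assms shortest_unique unfolding dominant_iff by blast+
qed

lemma exists_shortest:
  assumes "x \<in> weight_lattice R"
  obtains y v where "y \<in> dominant R Sr" "shortest y x v"
proof -
  obtain w where w: "w \<in> W" "is_dominant Sr (w x)"
    using exists_dominant_conjugate[OF order_refl] by blast
  moreover obtain w' where "w' \<in> W" "\<forall>x. w' (w x) = x"
    using gen_by_rfl_inverse[OF w(1) simple_roots] by blast
  moreover have "w x \<in> weight_lattice R"
    using gen_by_rfl_weight_lattice[OF w(1) simple_roots assms] .
  ultimately show ?thesis using that shortest_exists dominant_iff by metis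
qed

lemma vbar_dom_rep: "x \<in> weight_lattice R \<Longrightarrow> vbar R Sr x (dom_rep R Sr x) = x"
  by (metis exists_shortest shortest_def shortest_dom_rep shortest_vbar)

lemma par_rep_below:
  assumes "I \<subseteq> rfl ` Sr" "x \<in> weight_lattice R"
  shows "dom_rep R Sr (par_rep R Sr I x) = dom_rep R Sr x"
    and "bruhat_le R Sr (vbar R Sr (par_rep R Sr I x)) (vbar R Sr x)"
proof -
  let ?B = "par_simple Sr I"
  have B: "?B \<subseteq> Sr" "?B \<subseteq> R" "rfl ` ?B = I"
    using rfl_image_par_simple[OF assms(1)] simple_roots by (auto simp: par_simple_def)
  obtain y v where y: "y \<in> dominant R Sr" and v: "shortest y x v"
    using exists_shortest[OF assms(2)] .
  then obtain u v' where u: "u \<in> gen_by I" "is_dominant ?B (u x)" and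
    v': "shortest y (u x) v'" "bruhat_le R Sr v' v"
    using descent_to_dominant[OF _ B(1)] B(3) unfolding dominant_iff by metis
  have "u x \<in> par_dominant R Sr I"
    using gen_by_rfl_weight_lattice[OF _ B(2) assms(2)] u B(3) unfolding par_dominant_iff by auto
  then have "par_rep R Sr I x = u x" using par_rep_eqI[OF assms(1) _ u(1)] by blast
  then show "dom_rep R Sr (par_rep R Sr I x) = dom_rep R Sr x"
    and "bruhat_le R Sr (vbar R Sr (par_rep R Sr I x)) (vbar R Sr x)"
    using shortest_dom_rep[OF y] shortest_vbar[OF y] v v' by simp_all
qed

end

theorem mainTheorem6:
  fixes R Sr :: "'a::euclidean_space set" and I :: "('a \<Rightarrow> 'a) set" and lam mu :: 'a
  assumes "root_system R"
    and "is_base R Sr"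
    and "I \<subseteq> simple_refls Sr"
    and "lam \<in> par_dominant R Sr I"
    and "mu \<in> weight_lattice R"
    and "dom_rep R Sr mu = dom_rep R Sr lam"
    and "less_empty R Sr mu lam"
  shows "less_empty R Sr (par_rep R Sr I mu) lam"
proof -
  interpret based_root_system R Sr using assms(1,2) by unfold_locales
  let ?z = "par_rep R Sr I mu"
  have I: "I \<subseteq> rfl ` Sr" using assms(3) unfolding simple_refls_def .
  have lam: "lam \<in> weight_lattice R" using assms(4) unfolding par_dominant_def by blast
  have mu_lam: "bruhat_le R Sr (vbar R Sr mu) (vbar R Sr lam)" "mu \<noteq> lam"
    using assms(6,7) unfolding less_empty_def le_empty_def by auto
  have z_dom: "dom_rep R Sr ?z = dom_rep R Sr lam" and z_mu: "bruhat_le R Sr (vbar R Sr ?z) (vbar R Sr mu)"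
    using par_rep_below[OF I assms(5)] assms(6) by simp_all
  have "?z \<noteq> lam"
  proof
    assume "?z = lam"
    then have "vbar R Sr mu = vbar R Sr lam"
      using bruhat_le_antisym mu_lam(1) z_mu by blast
    then show False
      using vbar_dom_rep[OF assms(5)] vbar_dom_rep[OF lam] assms(6) mu_lam(2) by metis
  qed
  then show ?thesis
    using z_dom bruhat_le_trans[OF z_mu mu_lam(1)] nn_comb_zero
    unfolding less_empty_def le_empty_def dom_order_def by simp
qed

end
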